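(* Let $G$ be a graph on $V$ and $W\subseteq V$ reducible in $G$. Then for every combinatorial reduction strategy applicable to $G$ whose domain is $W$, the number of applications of the negative rule $\mathrm{gnr}$ in the strategy equals the nullity of $W$ in $G$, namely $|W|-\operatorname{rank}_{\mathbf F_2}(A_{W,W})$. In particular, all such strategies use the same number of negative rules, and every successful strategy (domain $V$) uses exactly $|V|-\operatorname{rank}_{\mathbf F_2}(A)$ negative rules.
   Context: A graph means a finite simple graph in which loops are allowed, with adjacency matrix $A$ over $\mathbf F_2$ ($A_{vv}=1$ iff $v$ has a loop); $A_{W,W}$ is the principal submatrix on $W$. Let $\mathcal V$ be the $\mathbf F_2$-vector space with basis $V$, $\mathcal E(x,y)=x^TAy$, $\langle W\rangle$ the span of $W$, $\langle W\rangle^{\perp\mathcal E}=\{x:\mathcal E(x,w)=0\ \forall w\in\langle W\rangle\}$; $W$ is reducible if $\langle W\rangle+\langle W\rangle^{\perp\mathcal E}=\mathcal V$. Combinatorial reduction rules (domain ordered first, $R$ the principal submatrix on the remaining vertices): $\mathrm{gpr}_v$ applies iff $v$ has a loop, $\begin{pmatrix}1&Q\\Q^T&R\end{pmatrix}\mapsto R-Q^TQ$; $\mathrm{gdr}_{v_1,v_2}$ applies iff $v_1,v_2$ are loopless and adjacent, $\begin{pmatrix}J&Q\\Q^T&R\end{pmatrix}\mapsto R-Q^TJQ$, $J=\begin{pmatrix}0&1\\1&0\end{pmatrix}$; $\mathrm{gnr}_v$ (negative rule) applies iff $v$ is loopless with no neighbors, $\begin{pmatrix}0&\mathbf 0\\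 \mathbf 0^T&R\end{pmatrix}\mapsto R$. A combinatorial reduction strategy is a sequence $(\gamma_1,\dots,\gamma_k)$ of such rules; it is applicable to $G$ if each $\gamma_i$ applies to $\gamma_{i-1}\circ\cdots\circ\gamma_1(G)$; its domain is the set of all vertices removed; it is successful if applicable with domain $V$. *)

theory Defs
  imports Main
begin

text \<open>A graph (loops allowed) on the finite vertex set V is given by a symmetric
  adjacency relation A; A u v is the F2 entry of the adjacency matrix (True = 1),
  A v v means v has a loop. Values of A outside V x V are irrelevant.\<close>

definition is_graph :: "'a set \<Rightarrow> ('a \<Rightarrow> 'a \<Rightarrow> bool) \<Rightarrow> bool" where
  "is_graph V A \<longleftrightarrow> finite V \<and> (\<forall>u v. A u v = A v u)"

text \<open>F2-vectors of the space with basis V are identified with subsets of V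
  (addition = symmetric difference).\<close>

definition bilin :: "('a \<Rightarrow> 'a \<Rightarrow> bool) \<Rightarrow> 'a set \<Rightarrow> 'a set \<Rightarrow> bool" where
  "bilin A x y \<longleftrightarrow> odd (card {(u, v). u \<in> x \<and> v \<in> y \<and> A u v})"

definition span_set :: "'a set \<Rightarrow> 'a set set" where
  "span_set W = Pow W"

definition perpE :: "'a set \<Rightarrow> ('a \<Rightarrow> 'a \<Rightarrow> bool) \<Rightarrow> 'a set \<Rightarrow> 'a set set" where
  "perpE V A W = {x. x \<subseteq> V \<and> (\<forall>w\<in>span_set W. \<not> bilin A x w)}"

definition reducible :: "'a set \<Rightarrow> ('a \<Rightarrow> 'a \<Rightarrow> bool) \<Rightarrow> 'a set \<Rightarrow> bool" where
  "reducible V A W \<longleftrightarrow>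
     (\<forall>z. z \<subseteq> V \<longrightarrow> (\<exists>x\<in>span_set W. \<exists>y\<in>perpE V A W. z = (x - y) \<union> (y - x)))"

text \<open>Over F2 a nontrivial linear combination of rows
  indexed by S is the sum of the rows indexed by a nonempty subset T of S.\<close>

definition rows_indep :: "('a \<Rightarrow> 'a \<Rightarrow> bool) \<Rightarrow> 'a set \<Rightarrow> 'a set \<Rightarrow> bool" where
  "rows_indep A W S \<longleftrightarrow>
     (\<forall>T. T \<subseteq> S \<longrightarrow> T \<noteq> {} \<longrightarrow> (\<exists>w\<in>W. odd (card {u\<in>T. A u w})))"

definition f2_rank :: "('a \<Rightarrow> 'a \<Rightarrow> bool) \<Rightarrow> 'a set \<Rightarrow> nat" where
  "f2_rank A W = Max {card S | S. S \<subseteq> W \<and> rows_indep A W S}"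

definition nullity :: "('a \<Rightarrow> 'a \<Rightarrow> bool) \<Rightarrow> 'a set \<Rightarrow> nat" where
  "nullity A W = card W - f2_rank A W"

datatype 'a rule = Gpr 'a | Gdr 'a 'a | Gnr 'a

type_synonym 'a graph = "'a set \<times> ('a \<Rightarrow> 'a \<Rightarrow> bool)"

fun rule_applies :: "'a graph \<Rightarrow> 'a rule \<Rightarrow> bool" where
  "rule_applies (V, A) (Gpr v) \<longleftrightarrow> v \<in> V \<and> A v v"
| "rule_applies (V, A) (Gdr v1 v2) \<longleftrightarrow>
     v1 \<in> V \<and> v2 \<in> V \<and> v1 \<noteq> v2 \<and> \<not> A v1 v1 \<and> \<not> A v2 v2 \<and> A v1 v2"
| "rule_applies (V, A) (Gnr v) \<longleftrightarrow> v \<in> V \<and> (\<forall>u\<in>V. \<not> A v u)"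

text \<open>Over F2, subtraction is xor (written as \<noteq> on bool).
  gpr: R - Q^T Q; gdr: R - Q^T J Q; gnr: R.\<close>

fun rule_step :: "'a graph \<Rightarrow> 'a rule \<Rightarrow> 'a graph" where
  "rule_step (V, A) (Gpr v) = (V - {v}, \<lambda>x y. A x y \<noteq> (A v x \<and> A v y))"
| "rule_step (V, A) (Gdr v1 v2) =
     (V - {v1, v2}, \<lambda>x y. A x y \<noteq> ((A v1 x \<and> A v2 y) \<noteq> (A v2 x \<and> A v1 y)))"
| "rule_step (V, A) (Gnr v) = (V - {v}, A)"

fun rule_dom :: "'a rule \<Rightarrow> 'a set" where
  "rule_dom (Gpr v) = {v}"
| "rule_dom (Gdr v1 v2) = {v1, v2}"
| "rule_dom (Gnr v) = {v}"

fun is_gnr :: "'a rule \<Rightarrow> bool" where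
  "is_gnr (Gnr v) = True"
| "is_gnr _ = False"

fun strategy_applicable :: "'a graph \<Rightarrow> 'a rule list \<Rightarrow> bool" where
  "strategy_applicable G [] = True"
| "strategy_applicable G (r # rs) \<longleftrightarrow> rule_applies G r \<and> strategy_applicable (rule_step G r) rs"

definition strategy_domain :: "'a rule list \<Rightarrow> 'a set" where
  "strategy_domain rs = (\<Union>r\<in>set rs. rule_dom r)"

definition num_gnr :: "'a rule list \<Rightarrow> nat" where
  "num_gnr rs = length (filter is_gnr rs)"

definition successful :: "'a graph \<Rightarrow> 'a rule list \<Rightarrow> bool" where
  "successful G rs \<longleftrightarrow> strategy_applicable G rs \<and> strategy_domain rs = fst G"

end

theory Submission
  imports Defs
begin

text \<open>
  Write rk(R, C) for the F2-rank of the submatrix of A with rows R and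
  columns C.  Gaussian elimination gives the pivoting identity: if A a b = 1 with a \<in> R,
  b \<in> C, then rk(R, C) = 1 + rk(R - {a}, C - {b}) computed for the matrix
  A + A(., b) A(a, .), i.e. the Schur complement of the entry (a, b).  The rule gpr is one
  such pivot on a diagonal entry, gdr is two successive pivots on (v1, v2) and (v2, v1),
  and gnr deletes a zero row and column, which does not change the rank.  Hence each rule
  r applied inside W lowers the rank of the principal submatrix on the remaining vertices
  by |dom r| unless r is a negative rule, in which case it lowers it by 0.  Induction over
  the strategy yields |dom rs| = #gnr(rs) + rk(dom rs, dom rs), which is the theorem.
\<close>

text \<open>parity T P is the F2-sum over T of the indicator P; for P = (\<lambda>u. A u w) it is the
  w-entry of the sum of the rows indexed by T.\<close>

definition parity :: "'a set \<Rightarrow> ('a \<Rightarrow> bool) \<Rightarrow> bool" where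
  "parity T P \<longleftrightarrow> odd (card {u\<in>T. P u})"

lemma parity_empty [simp]: "\<not> parity {} P"
  by (simp add: parity_def)

lemma parity_insert:
  assumes "finite T" and "v \<notin> T"
  shows "parity (insert v T) P \<longleftrightarrow> P v \<noteq> parity T P"
proof -
  have "{u \<in> insert v T. P u} = (if P v then insert v {u\<in>T. P u} else {u\<in>T. P u})"
    by auto
  then show ?thesis using assms by (simp add: parity_def)
qed

lemma parity_xor:
  "finite T \<Longrightarrow> parity T (\<lambda>u. P u \<noteq> Q u) \<longleftrightarrow> parity T P \<noteq> parity T Q"
  by (induction T rule: finite_induct) (auto simp: parity_insert)

lemma parity_remove:
  assumes "finite T"
  shows "parity T P \<longleftrightarrow> parity (T - {a}) P \<noteq> (a \<in> T \<and> P a)"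
proof (cases "a \<in> T")
  case True
  have "parity (insert a (T - {a})) P \<longleftrightarrow> P a \<noteq> parity (T - {a}) P"
    using assms by (intro parity_insert) auto
  then show ?thesis using True by (auto simp: insert_absorb)
qed simp

lemma parity_restrict: "X \<subseteq> U \<Longrightarrow> parity X P \<longleftrightarrow> parity U (\<lambda>u. u \<in> X \<and> P u)"
proof -
  assume "X \<subseteq> U"
  then have "{u\<in>X. P u} = {u\<in>U. u \<in> X \<and> P u}" by auto
  then show ?thesis by (simp add: parity_def)
qed

lemma parity_symdiff:
  assumes "finite X" and "finite Y"
  shows "parity ((X - Y) \<union> (Y - X)) P \<longleftrightarrow> parity X P \<noteq> parity Y P"
proof -
  let ?U = "X \<union> Y"
  have "parity ((X - Y) \<union> (Y - X)) P \<longleftrightarrow> parity ?U (\<lambda>u. (u \<in> X \<and> P u) \<noteq> (u \<in> Y \<and> P u))"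
    by (subst parity_restrict[of _ ?U]) (auto intro!: arg_cong[where f = "parity ?U"])
  also have "\<dots> \<longleftrightarrow> parity ?U (\<lambda>u. u \<in> X \<and> P u) \<noteq> parity ?U (\<lambda>u. u \<in> Y \<and> P u)"
    using assms by (intro parity_xor) simp
  also have "\<dots> \<longleftrightarrow> parity X P \<noteq> parity Y P"
    by (simp add: parity_restrict[of X ?U] parity_restrict[of Y ?U])
  finally show ?thesis .
qed

subsection \<open>Rank of a submatrix\<close>

lemma rows_indep_parity:
  "rows_indep A C S \<longleftrightarrow> (\<forall>T. T \<subseteq> S \<longrightarrow> T \<noteq> {} \<longrightarrow> (\<exists>w\<in>C. parity T (\<lambda>u. A u w)))"
  by (simp add: rows_indep_def parity_def)

lemma rows_indep_empty: "rows_indep A C {}"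
  by (simp add: rows_indep_def)

definition sub_rank :: "('a \<Rightarrow> 'a \<Rightarrow> bool) \<Rightarrow> 'a set \<Rightarrow> 'a set \<Rightarrow> nat" where
  "sub_rank A R C = Max {card S | S. S \<subseteq> R \<and> rows_indep A C S}"

lemma f2_rank_sub_rank: "f2_rank A W = sub_rank A W W"
  by (simp add: f2_rank_def sub_rank_def)

lemma finite_indep_cards:
  assumes "finite R"
  shows "finite {card S | S. S \<subseteq> R \<and> rows_indep A C S}"
proof (rule finite_subset)
  show "{card S | S. S \<subseteq> R \<and> rows_indep A C S} \<subseteq> {..card R}"
    using assms by (auto intro: card_mono)
qed simp

lemma sub_rank_ge:
  "finite R \<Longrightarrow> S \<subseteq> R \<Longrightarrow> rows_indep A C S \<Longrightarrow> card S \<le> sub_rank A R C"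
  unfolding sub_rank_def by (rule Max_ge) (auto simp: finite_indep_cards)

lemma sub_rank_attained:
  assumes "finite R"
  obtains S where "S \<subseteq> R" and "rows_indep A C S" and "card S = sub_rank A R C"
proof -
  have "sub_rank A R C \<in> {card S | S. S \<subseteq> R \<and> rows_indep A C S}"
    unfolding sub_rank_def
  proof (rule Max_in)
    show "finite {card S | S. S \<subseteq> R \<and> rows_indep A C S}"
      using assms by (rule finite_indep_cards)
    show "{card S | S. S \<subseteq> R \<and> rows_indep A C S} \<noteq> {}"
      using rows_indep_empty by blast
  qed
  then obtain S where "S \<subseteq> R" "rows_indep A C S" "sub_rank A R C = card S"
    by blast
  then show ?thesis using that by simp
qed

lemma sub_rank_image: "sub_rank A R C = Max (card ` {S. S \<subseteq> R \<and> rows_indep A C S})"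
  by (simp add: sub_rank_def image_Collect)

lemma sub_rank_empty: "sub_rank A {} C = 0"
  by (simp add: sub_rank_image rows_indep_empty)

lemma sub_rank_cong:
  assumes "\<And>S. S \<subseteq> R \<Longrightarrow> rows_indep A C S \<longleftrightarrow> rows_indep A' C' S"
  shows "sub_rank A R C = sub_rank A' R C'"
proof -
  have "{S. S \<subseteq> R \<and> rows_indep A C S} = {S. S \<subseteq> R \<and> rows_indep A' C' S}"
    using assms by blast
  then show ?thesis by (simp add: sub_rank_image)
qed

text \<open>A zero row never belongs to an independent set, so it can be dropped.\<close>

lemma sub_rank_zero_row:
  assumes "\<forall>w\<in>C. \<not> A v w"
  shows "sub_rank A R C = sub_rank A (R - {v}) C"
proof -
  have "\<not> parity {v} (\<lambda>u. A u w)" if "w \<in> C" for w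
    using that assms by (simp add: parity_insert)
  then have "v \<notin> S" if "rows_indep A C S" for S
    using that unfolding rows_indep_parity by blast
  then have "{S. S \<subseteq> R \<and> rows_indep A C S} = {S. S \<subseteq> R - {v} \<and> rows_indep A C S}"
    by blast
  then show ?thesis by (simp add: sub_rank_image)
qed

lemma sub_rank_zero_col:
  assumes "\<forall>u\<in>R. \<not> A u b"
  shows "sub_rank A R C = sub_rank A R (C - {b})"
proof (rule sub_rank_cong)
  fix S assume "S \<subseteq> R"
  then have no_b: "{u\<in>T. A u b} = {}" if "T \<subseteq> S" for T
    using that assms by blast
  have "\<not> parity T (\<lambda>u. A u b)" if "T \<subseteq> S" for T
    unfolding parity_def no_b[OF that] by simp
  then have "(\<exists>w\<in>C. parity T (\<lambda>u. A u w)) \<longleftrightarrow> (\<exists>w\<in>C - {b}. parity T (\<lambda>u. A u w))"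
    if "T \<subseteq> S" for T
    using that by blast
  then show "rows_indep A C S \<longleftrightarrow> rows_indep A (C - {b}) S"
    unfolding rows_indep_parity by blast
qed

subsection \<open>Pivoting\<close>

text \<open>Pivoting on the entry (a, b) replaces A by A + A(., b) A(a, .) over F2.  Restricted to
  rows R - {a} and columns C - {b} this is the Schur complement of the entry (a, b).\<close>

definition pivot :: "('a \<Rightarrow> 'a \<Rightarrow> bool) \<Rightarrow> 'a \<Rightarrow> 'a \<Rightarrow> 'a \<Rightarrow> 'a \<Rightarrow> bool" where
  "pivot A a b = (\<lambda>x y. A x y \<noteq> (A x b \<and> A a y))"

lemma parity_pivot:
  assumes "finite T"
  shows "parity T (\<lambda>u. pivot A a b u y) \<longleftrightarrow>
           parity T (\<lambda>u. A u y) \<noteq> (parity T (\<lambda>u. A u b) \<and> A a y)"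
proof (cases "A a y")
  case True
  then have "parity T (\<lambda>u. pivot A a b u y) \<longleftrightarrow> parity T (\<lambda>u. A u y \<noteq> A u b)"
    by (simp add: pivot_def)
  also have "\<dots> \<longleftrightarrow> parity T (\<lambda>u. A u y) \<noteq> parity T (\<lambda>u. A u b)"
    using assms by (rule parity_xor)
  finally show ?thesis using True by simp
qed (simp add: pivot_def)

lemma rows_indep_pivot_insert:
  assumes fin: "finite S" and a: "a \<notin> S" and b: "b \<in> C" and ab: "A a b"
    and indep: "rows_indep (pivot A a b) (C - {b}) S"
  shows "rows_indep A C (insert a S)"
  unfolding rows_indep_parity
proof (intro allI impI)
  fix T assume T: "T \<subseteq> insert a S" and "T \<noteq> {}"
  show "\<exists>w\<in>C. parity T (\<lambda>u. A u w)"
  proof (rule ccontr)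
    assume "\<not> ?thesis"
    then have zero: "\<not> parity T (\<lambda>u. A u w)" if "w \<in> C" for w
      using that by blast
    define T0 where "T0 = T - {a}"
    have fT: "finite T" using T fin finite_subset by blast
    then have fin0: "finite T0" by (simp add: T0_def)
    have split: "parity T (\<lambda>u. A u y) \<longleftrightarrow> parity T0 (\<lambda>u. A u y) \<noteq> (a \<in> T \<and> A a y)" for y
      unfolding T0_def using fT by (rule parity_remove)
    have col_b: "parity T0 (\<lambda>u. A u b) \<longleftrightarrow> a \<in> T"
      using zero[OF b] split[of b] ab by blast
    show False
    proof (cases "T0 = {}")
      case True
      then have "a \<notin> T" using col_b by simp
      then show False using True \<open>T \<noteq> {}\<close> by (simp add: T0_def)
    next
      case False
      moreover have "T0 \<subseteq> S" using T by (auto simp: T0_def)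
      ultimately obtain w where w: "w \<in> C - {b}" and "parity T0 (\<lambda>u. pivot A a b u w)"
        using indep unfolding rows_indep_parity by blast
      then have "parity T (\<lambda>u. A u w)"
        using parity_pivot[OF fin0, of A a b w] split[of w] col_b by simp
      then show False using zero w by blast
    qed
  qed
qed

lemma rows_indep_pivot_remove:
  assumes fin: "finite S" and a: "a \<in> S" and b: "b \<in> C" and ab: "A a b"
    and indep: "rows_indep A C S"
  shows "rows_indep (pivot A a b) (C - {b}) (S - {a})"
  unfolding rows_indep_parity
proof (intro allI impI)
  fix T assume T: "T \<subseteq> S - {a}" and "T \<noteq> {}"
  have fT: "finite T" using T fin finite_subset by blast
  have aT: "a \<notin> T" using T by blast
  show "\<exists>w\<in>C - {b}. parity T (\<lambda>u. pivot A a b u w)"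
  proof (rule ccontr)
    assume "\<not> ?thesis"
    then have zero: "\<not> parity T (\<lambda>u. pivot A a b u w)" if "w \<in> C - {b}" for w
      using that by blast
    define c where "c = parity T (\<lambda>u. A u b)"
    define T' where "T' = (if c then insert a T else T)"
    have "T' \<subseteq> S" and "T' \<noteq> {}" using T a \<open>T \<noteq> {}\<close> by (auto simp: T'_def)
    have sum_T': "parity T' (\<lambda>u. A u w) \<longleftrightarrow> parity T (\<lambda>u. A u w) \<noteq> (c \<and> A a w)" for w
      using fT aT by (cases c) (auto simp: T'_def parity_insert)
    have "\<not> parity T' (\<lambda>u. A u w)" if w: "w \<in> C" for w
    proof (cases "w = b")
      case True
      then show ?thesis using sum_T'[of b] ab c_def by auto
    next
      case False
      then show ?thesis
        using zero[of w] w sum_T'[of w] parity_pivot[OF fT, of A a b w] c_def by auto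
    qed
    then show False
      using indep \<open>T' \<subseteq> S\<close> \<open>T' \<noteq> {}\<close> unfolding rows_indep_parity by blast
  qed
qed

lemma dependent_insert:
  assumes fin: "finite S" and indep: "rows_indep A C S"
    and dep: "\<not> rows_indep A C (insert a S)"
  obtains T where "T \<subseteq> S" and "\<And>w. w \<in> C \<Longrightarrow> parity T (\<lambda>u. A u w) \<longleftrightarrow> A a w"
proof -
  obtain T where T: "T \<subseteq> insert a S" "T \<noteq> {}" and zero: "\<forall>w\<in>C. \<not> parity T (\<lambda>u. A u w)"
    using dep unfolding rows_indep_parity by blast
  have "a \<in> T"
    using T zero indep unfolding rows_indep_parity by (metis subset_insert)
  have "finite T" using T fin finite_subset by blast
  then have "parity (T - {a}) (\<lambda>u. A u w) \<longleftrightarrow> A a w" if "w \<in> C" for w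
    using zero that \<open>a \<in> T\<close> parity_remove[of T "\<lambda>u. A u w" a] by blast
  moreover have "T - {a} \<subseteq> S" using T by blast
  ultimately show ?thesis using that by blast
qed

lemma rows_indep_exchange:
  assumes fin: "finite S" and indep: "rows_indep A C S" and T: "T \<subseteq> S" "u \<in> T"
    and row_a: "\<And>w. w \<in> C \<Longrightarrow> parity T (\<lambda>u. A u w) \<longleftrightarrow> A a w"
  shows "rows_indep A C (insert a (S - {u}))"
  unfolding rows_indep_parity
proof (intro allI impI)
  fix T' assume T': "T' \<subseteq> insert a (S - {u})" and "T' \<noteq> {}"
  have fT': "finite T'" using T' fin finite_subset by blast
  show "\<exists>w\<in>C. parity T' (\<lambda>u. A u w)"
  proof (rule ccontr)
    assume "\<not> ?thesis"
    then have zero: "\<not> parity T' (\<lambda>u. A u w)" if "w \<in> C" for w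
      using that by blast
    show False
    proof (cases "a \<in> T'")
      case False
      then have "T' \<subseteq> S" using T' by blast
      then show False using indep zero \<open>T' \<noteq> {}\<close> unfolding rows_indep_parity by blast
    next
      case True
      define T0 where "T0 = T' - {a}"
      define D where "D = (T0 - T) \<union> (T - T0)"
      have fin0: "finite T0" and fT: "finite T"
        using fT' T fin finite_subset by (auto simp: T0_def)
      have "D \<subseteq> S" and "u \<in> D" using T' T by (auto simp: D_def T0_def)
      moreover have "\<not> parity D (\<lambda>u. A u w)" if "w \<in> C" for w
      proof -
        have "parity T0 (\<lambda>u. A u w) \<longleftrightarrow> A a w"
          using zero[OF that] True parity_remove[OF fT', of "\<lambda>u. A u w" a]
          by (simp add: T0_def)
        then show ?thesis
          unfolding D_def parity_symdiff[OF fin0 fT] using row_a[OF that] by simp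
      qed
      ultimately show False using indep unfolding rows_indep_parity by blast
    qed
  qed
qed

lemma rows_indep_through:
  assumes fin: "finite R" and S: "S \<subseteq> R" "rows_indep A C S"
    and a: "a \<in> R" and b: "b \<in> C" and ab: "A a b"
  obtains S' where "S' \<subseteq> R" "a \<in> S'" "card S \<le> card S'" "rows_indep A C S'"
proof (cases "rows_indep A C (insert a S)")
  case True
  have "finite S" using S fin finite_subset by blast
  then show ?thesis using that[of "insert a S"] True S a by (simp add: card_insert_le)
next
  case False
  have fS: "finite S" using S fin finite_subset by blast
  have "a \<notin> S" using False S by (metis insert_absorb)
  obtain T where T: "T \<subseteq> S" and row_a: "\<And>w. w \<in> C \<Longrightarrow> parity T (\<lambda>u. A u w) \<longleftrightarrow> A a w"
    using dependent_insert[OF fS S(2) False] by blast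
  obtain u where u: "u \<in> T" using row_a[OF b] ab by fastforce
  have indep': "rows_indep A C (insert a (S - {u}))"
    using rows_indep_exchange[OF fS S(2) T u row_a] .
  have "u \<in> S" using u T by blast
  then have "card S > 0" using fS card_gt_0_iff by blast
  moreover have "card (insert a (S - {u})) = Suc (card S - 1)"
    using fS \<open>a \<notin> S\<close> \<open>u \<in> S\<close> by simp
  ultimately have "card (insert a (S - {u})) = card S" by simp
  then show ?thesis using that[of "insert a (S - {u})"] indep' S a by auto
qed

lemma sub_rank_pivot:
  assumes fin: "finite R" and a: "a \<in> R" and b: "b \<in> C" and ab: "A a b"
  shows "sub_rank A R C = Suc (sub_rank (pivot A a b) (R - {a}) (C - {b}))"
proof (rule antisym)
  have fin': "finite (R - {a})" using fin by simp
  obtain S where S: "S \<subseteq> R" "rows_indep A C S" "card S = sub_rank A R C"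
    using sub_rank_attained[OF fin] by blast
  obtain S' where S': "S' \<subseteq> R" "a \<in> S'" "card S \<le> card S'" "rows_indep A C S'"
    using rows_indep_through[OF fin S(1,2) a b ab] by blast
  have "finite S'" using S'(1) fin finite_subset by blast
  have "card (S' - {a}) \<le> sub_rank (pivot A a b) (R - {a}) (C - {b})"
    using S' \<open>finite S'\<close> b ab by (intro sub_rank_ge[OF fin'] rows_indep_pivot_remove) auto
  then show "sub_rank A R C \<le> Suc (sub_rank (pivot A a b) (R - {a}) (C - {b}))"
    using S(3) S'(2,3) \<open>finite S'\<close> by (simp add: card_Diff_singleton)
next
  have fin': "finite (R - {a})" using fin by simp
  obtain S where S: "S \<subseteq> R - {a}" "rows_indep (pivot A a b) (C - {b}) S"
    "card S = sub_rank (pivot A a b) (R - {a}) (C - {b})"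
    using sub_rank_attained[OF fin'] by blast
  have "finite S" using S(1) fin' finite_subset by blast
  have "a \<notin> S" using S(1) by blast
  have "card (insert a S) \<le> sub_rank A R C"
    using S a \<open>finite S\<close> b ab by (intro sub_rank_ge[OF fin] rows_indep_pivot_insert) auto
  then show "Suc (sub_rank (pivot A a b) (R - {a}) (C - {b})) \<le> sub_rank A R C"
    using S(3) \<open>finite S\<close> \<open>a \<notin> S\<close> by simp
qed

subsection \<open>A single reduction rule\<close>

lemma rule_step_vertices: "fst (rule_step (V, A) r) = V - rule_dom r"
  by (cases r) auto

lemma rule_step_symmetric:
  "\<forall>u v. A u v = A v u \<Longrightarrow> \<forall>u v. snd (rule_step (V, A) r) u v = snd (rule_step (V, A) r) v u"
  by (cases r) auto

lemma rule_applies_dom: "rule_applies (V, A) r \<Longrightarrow> rule_dom r \<subseteq> V"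
  by (cases r) auto

lemma gpr_is_pivot:
  assumes "\<forall>u v. A u v = A v u"
  shows "snd (rule_step (V, A) (Gpr v)) = pivot A v v"
  using assms by (auto simp: pivot_def)

lemma gdr_is_double_pivot:
  assumes "\<forall>u v. A u v = A v u" and "\<not> A v1 v1" and "\<not> A v2 v2"
  shows "snd (rule_step (V, A) (Gdr v1 v2)) = pivot (pivot A v1 v2) v2 v1"
  using assms by (auto simp: pivot_def fun_eq_iff)

lemma rule_step_rank:
  assumes sym: "\<forall>u v. A u v = A v u" and W: "W \<subseteq> V" "finite W"
    and applies: "rule_applies (V, A) r" and dom: "rule_dom r \<subseteq> W"
  shows "f2_rank A W = f2_rank (snd (rule_step (V, A) r)) (W - rule_dom r)
           + (if is_gnr r then 0 else card (rule_dom r))"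
proof (cases r)
  case (Gpr v)
  then have "v \<in> W" "A v v" using applies dom by auto
  then have "sub_rank A W W = Suc (sub_rank (pivot A v v) (W - {v}) (W - {v}))"
    using W(2) by (intro sub_rank_pivot)
  then show ?thesis using Gpr gpr_is_pivot[OF sym] by (simp add: f2_rank_sub_rank)
next
  case (Gdr v1 v2)
  then have v: "v1 \<in> W" "v2 \<in> W" "v1 \<noteq> v2" "\<not> A v1 v1" "\<not> A v2 v2" "A v1 v2"
    using applies dom by auto
  have second_pivot: "pivot A v1 v2 v2 v1" using v sym by (simp add: pivot_def)
  have rest: "W - {v1} - {v2} = W - {v1, v2}" "W - {v2} - {v1} = W - {v1, v2}"
    by auto
  have "sub_rank A W W = Suc (sub_rank (pivot A v1 v2) (W - {v1}) (W - {v2}))"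
    using W(2) v by (intro sub_rank_pivot)
  also have "\<dots> = Suc (Suc (sub_rank (pivot (pivot A v1 v2) v2 v1) (W - {v1, v2}) (W - {v1, v2})))"
    using sub_rank_pivot[where R = "W - {v1}" and C = "W - {v2}" and A = "pivot A v1 v2"
        and a = v2 and b = v1] W(2) v second_pivot
    by (simp add: rest)
  finally show ?thesis
    using Gdr v gdr_is_double_pivot[OF sym v(4,5)] by (simp add: f2_rank_sub_rank)
next
  case (Gnr v)
  then have "v \<in> W" and isolated: "\<forall>u\<in>V. \<not> A v u" using applies dom by auto
  then have "sub_rank A W W = sub_rank A (W - {v}) W"
    using W(1) by (intro sub_rank_zero_row) blast
  also have "\<dots> = sub_rank A (W - {v}) (W - {v})"
    using W(1) isolated sym by (intro sub_rank_zero_col) blast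
  finally show ?thesis using Gnr by (simp add: f2_rank_sub_rank)
qed

lemma strategy_domain_subset:
  "strategy_applicable (V, A) rs \<Longrightarrow> strategy_domain rs \<subseteq> V"
proof (induction rs arbitrary: V A)
  case Nil
  then show ?case by (simp add: strategy_domain_def)
next
  case (Cons r rs)
  obtain V' A' where step: "rule_step (V, A) r = (V', A')" by fastforce
  then have "strategy_applicable (V', A') rs" using Cons.prems by simp
  then have "strategy_domain rs \<subseteq> V'" by (rule Cons.IH)
  moreover have "V' = V - rule_dom r" using rule_step_vertices[of V A r] step by simp
  moreover have "rule_dom r \<subseteq> V" using Cons.prems rule_applies_dom by auto
  ultimately show ?case by (auto simp: strategy_domain_def)
qed

lemma finite_strategy_domain: "finite (strategy_domain rs)"
proof -
  have "finite (rule_dom r)" for r :: "'a rule" by (cases r) auto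
  then show ?thesis unfolding strategy_domain_def by blast
qed

lemma strategy_rank_count:
  assumes "\<forall>u v. A u v = A v u" and "strategy_applicable (V, A) rs"
  shows "card (strategy_domain rs) = num_gnr rs + f2_rank A (strategy_domain rs)"
  using assms
proof (induction rs arbitrary: V A)
  case Nil
  then show ?case by (simp add: strategy_domain_def num_gnr_def f2_rank_sub_rank sub_rank_empty)
next
  case (Cons r rs)
  obtain V' A' where step: "rule_step (V, A) r = (V', A')" by fastforce
  define W where "W = strategy_domain (r # rs)"
  have applies: "rule_applies (V, A) r" and rest: "strategy_applicable (V', A') rs"
    using Cons.prems step by auto
  have "\<forall>u v. A' u v = A' v u" using rule_step_symmetric[OF Cons.prems(1), of V r] step by simp
  then have IH: "card (strategy_domain rs) = num_gnr rs + f2_rank A' (strategy_domain rs)"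
    using Cons.IH rest by blast
  have dom: "rule_dom r \<subseteq> W" by (auto simp: W_def strategy_domain_def)
  have "finite W" using finite_strategy_domain by (simp add: W_def)
  have "W \<subseteq> V" using strategy_domain_subset[OF Cons.prems(2)] by (simp add: W_def)
  have "strategy_domain rs \<subseteq> V - rule_dom r"
    using strategy_domain_subset[OF rest] rule_step_vertices[of V A r] step by simp
  then have rest_dom: "strategy_domain rs = W - rule_dom r"
    by (auto simp: W_def strategy_domain_def)
  have "f2_rank A W = f2_rank A' (W - rule_dom r) + (if is_gnr r then 0 else card (rule_dom r))"
    using rule_step_rank[OF Cons.prems(1) \<open>W \<subseteq> V\<close> \<open>finite W\<close> applies dom] step by simp
  moreover have "card W = card (W - rule_dom r) + card (rule_dom r)"
    using \<open>finite W\<close> dom by (metis card_Diff_subset card_mono finite_subset le_add_diff_inverse2)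
  moreover have "is_gnr r \<Longrightarrow> card (rule_dom r) = 1" by (cases r) auto
  ultimately show ?case
    using IH rest_dom by (cases "is_gnr r") (auto simp: W_def num_gnr_def)
qed

theorem mainTheorem12:
  fixes V W :: "'a set" and A :: "'a \<Rightarrow> 'a \<Rightarrow> bool"
  assumes "is_graph V A" and "W \<subseteq> V" and "reducible V A W"
  shows "(\<forall>rs. strategy_applicable (V, A) rs \<and> strategy_domain rs = W
            \<longrightarrow> num_gnr rs = nullity A W)
         \<and> (\<forall>rs. successful (V, A) rs \<longrightarrow> num_gnr rs = card V - f2_rank A V)"
proof -
  have sym: "\<forall>u v. A u v = A v u" using assms(1) by (simp add: is_graph_def)
  show ?thesis
    using strategy_rank_count[OF sym]
    by (auto simp: nullity_def successful_def)
qed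

end
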